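(* Let $\mathbb{F}\in\{\mathbb{R},\mathbb{C}\}$, let $A$ be an $n\times m$ matrix over $\mathbb{F}$, and let $p,q\in[1,\infty]$. Suppose $v\in\mathbb{F}^m$, $v\ne0$, is a maximizer of $\|Ax\|_q/\|x\|_p$ over nonzero $x\in\mathbb{F}^m$ such that (i) all nonzero components of $v$ have the same absolute value, and (ii) all nonzero components of $Av$ have the same absolute value. If $1<p<\infty$, or $p=1$ and $v\in K_1$, or $p=\infty$ and $v\in K_{-1}$, then $v$ is an eigenvector of $A^*A$.
   Context: $\|x\|_p$ is the Hölder $\ell_p$ norm. $A^*$ is the conjugate transpose. $K_1\subset\mathbb{F}^m$ is the set of vectors all of whose components have equal absolute values; $K_{-1}\subset\mathbb{F}^m$ is the set of vectors with at most one nonzero component. *)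

theory Defs
  imports "HOL-Analysis.Analysis"
begin

definition lpnorm :: "ereal \<Rightarrow> ('a::real_normed_vector) ^ 'm \<Rightarrow> real" where
  "lpnorm p x =
     (if p = \<infinity> then Max (range (\<lambda>i. norm (x $ i)))
      else (\<Sum>i\<in>UNIV. norm (x $ i) powr real_of_ereal p) powr (1 / real_of_ereal p))"

definition K1 :: "(('a::real_normed_vector) ^ 'm) set" where
  "K1 = {x. \<forall>i j. norm (x $ i) = norm (x $ j)}"

definition Km1 :: "(('a::real_normed_vector) ^ 'm) set" where
  "Km1 = {x. card {i. x $ i \<noteq> 0} \<le> 1}"

definition equal_modulus_support :: "('a::real_normed_vector) ^ 'm \<Rightarrow> bool" where
  "equal_modulus_support x \<longleftrightarrow>
     (\<forall>i j. x $ i \<noteq> 0 \<longrightarrow> x $ j \<noteq> 0 \<longrightarrow> norm (x $ i) = norm (x $ j))"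

definition is_pq_maximizer ::
  "ereal \<Rightarrow> ereal \<Rightarrow> ('a::{real_normed_vector, semiring_1}) ^ 'm ^ 'n \<Rightarrow> 'a ^ 'm \<Rightarrow> bool" where
  "is_pq_maximizer p q A v \<longleftrightarrow> v \<noteq> 0 \<and>
     (\<forall>x. x \<noteq> 0 \<longrightarrow> lpnorm q (A *v x) / lpnorm p x \<le> lpnorm q (A *v v) / lpnorm p v)"

definition cadjoint :: "complex ^ 'm ^ 'n \<Rightarrow> complex ^ 'n ^ 'm" where
  "cadjoint A = (\<chi> i j. cnj (A $ j $ i))"

definition lemma3p1_hyp ::
  "ereal \<Rightarrow> ereal \<Rightarrow> ('a::{real_normed_vector, semiring_1}) ^ 'm ^ 'n \<Rightarrow> 'a ^ 'm \<Rightarrow> bool" where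
  "lemma3p1_hyp p q A v \<longleftrightarrow>
     is_pq_maximizer p q A v \<and> equal_modulus_support v \<and> equal_modulus_support (A *v v) \<and>
     ((1 < p \<and> p < \<infinity>) \<or> (p = 1 \<and> v \<in> K1) \<or> (p = \<infinity> \<and> v \<in> Km1))"

end

theory Submission
  imports Defs
begin

text \<open>
  Put y = A v. As the nonzero entries of y have equal modulus, Hoelder's inequality against y is
  tight: (x \<bullet> y) * |y|_q \<le> (y \<bullet> y) * |x|_q for all x. Together with the maximality of v and
  (A x) \<bullet> y = x \<bullet> (A* y), this says that the functional x \<mapsto> x \<bullet> A* y attains its dual l_p norm
  at v. For p < \<infinity> the l_p norm is differentiable at v (for p = 1 because v has no zero entry),
  so this functional is a multiple of the gradient at v, which is parallel to v because the
  nonzero entries of v have equal modulus. For p = \<infinity> and v supported on one coordinate, the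
  l_1 bound on the functional forces the same. Hence A* A v = A* y is a multiple of v.
\<close>

section \<open>The power mean inequality\<close>

lemma powr_ge_tangent:
  fixes r m a :: real
  assumes "1 \<le> r" and "0 < m" and "0 \<le> a"
  shows "m powr r + r * m powr (r - 1) * (a - m) \<le> a powr r"
proof (cases "a = 0")
  case True
  have "m powr r + r * m powr (r - 1) * (0 - m) = (1 - r) * m powr r"
    using assms(2) by (simp add: powr_diff field_simps)
  also have "\<dots> \<le> 0"
    using assms(1) by (simp add: mult_nonpos_nonneg)
  finally show ?thesis
    using True by simp
next
  case False
  have "r * m powr (r - 1) * (a - m) \<le> a powr r - m powr r"
  proof (rule convex_on_imp_above_tangent[where A = "{0<..}"])
    show "convex_on {0<..} (\<lambda>x. x powr r)"
      using powr_convex[OF assms(1)] .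
    show "((\<lambda>x. x powr r) has_field_derivative r * m powr (r - 1)) (at m within {0<..})"
      using has_real_derivative_powr[OF assms(2)] by (rule has_field_derivative_at_within)
  qed (use assms False in \<open>auto simp: interior_open\<close>)
  then show ?thesis
    by simp
qed

lemma sum_le_card_powr_sum_powr:
  fixes a :: "'i \<Rightarrow> real"
  assumes "finite S" and "1 \<le> r" and nonneg: "\<And>i. i \<in> S \<Longrightarrow> 0 \<le> a i"
  shows "(\<Sum>i\<in>S. a i) \<le> card S powr (1 - 1 / r) * (\<Sum>i\<in>S. a i powr r) powr (1 / r)"
proof (cases "(\<Sum>i\<in>S. a i) = 0")
  case False
  define n where "n = real (card S)"
  define m where "m = (\<Sum>i\<in>S. a i) / n"
  have "S \<noteq> {}"
    using False by auto
  then have n: "0 < n"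
    using assms(1) by (simp add: n_def card_gt_0_iff)
  have m: "0 < m"
    using False n sum_nonneg[of S a] nonneg by (force simp: m_def)
  \<comment> \<open>Summing the tangent inequalities at the mean m gives the power mean inequality.\<close>
  have "(\<Sum>i\<in>S. m powr r + r * m powr (r - 1) * (a i - m)) = n * m powr r"
    using n by (simp add: sum.distrib sum_subtractf flip: sum_distrib_left) (simp add: n_def m_def)
  moreover have "(\<Sum>i\<in>S. m powr r + r * m powr (r - 1) * (a i - m)) \<le> (\<Sum>i\<in>S. a i powr r)"
    by (intro sum_mono powr_ge_tangent assms(2) m nonneg)
  ultimately have "(n * m powr r) powr (1 / r) \<le> (\<Sum>i\<in>S. a i powr r) powr (1 / r)"
    using n m assms(2) by (intro powr_mono2) auto
  moreover have "(n * m powr r) powr (1 / r) = n powr (1 / r) * m"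
    using n m assms(2) by (simp add: powr_mult powr_powr)
  moreover have "n powr (1 - 1 / r) * (n powr (1 / r) * m) = (\<Sum>i\<in>S. a i)"
    using n by (simp add: m_def flip: mult.assoc powr_add)
  ultimately show ?thesis
    using n by (metis mult_left_mono n_def powr_ge_zero)
qed simp

lemma lpnorm_ereal: "lpnorm (ereal r) x = (\<Sum>i\<in>UNIV. norm (x $ i) powr r) powr (1 / r)"
  by (simp add: lpnorm_def)

lemma lpnorm_infinity: "lpnorm \<infinity> x = Max (range (\<lambda>i. norm (x $ i)))"
  by (simp add: lpnorm_def)

lemma norm_le_lpnorm_infinity: "norm (x $ i) \<le> lpnorm \<infinity> x"
  by (simp add: lpnorm_infinity)

lemma lpnorm_infinity_le_iff: "lpnorm \<infinity> x \<le> c \<longleftrightarrow> (\<forall>i. norm (x $ i) \<le> c)"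
  by (simp add: lpnorm_infinity)

lemma lpnorm_zero [simp]: "lpnorm p 0 = 0"
  by (simp add: lpnorm_def)

lemma lpnorm_uminus [simp]: "lpnorm p (- x) = lpnorm p x"
  by (simp add: lpnorm_def)

lemma lpnorm_nonneg: "0 \<le> lpnorm p x"
  by (metis lpnorm_def norm_le_lpnorm_infinity norm_ge_zero order_trans powr_ge_zero)

lemma lpnorm_pos:
  assumes "0 < p" and "x \<noteq> 0"
  shows "0 < lpnorm p x"
proof -
  obtain k where k: "x $ k \<noteq> 0"
    using \<open>x \<noteq> 0\<close> by (metis vec_eq_iff zero_index)
  show ?thesis
  proof (cases p)
    case (real r)
    have "0 < norm (x $ k) powr r"
      using k by simp
    also have "\<dots> \<le> (\<Sum>i\<in>UNIV. norm (x $ i) powr r)"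
      by (rule member_le_sum) auto
    finally show ?thesis
      using real by (simp add: lpnorm_ereal)
  next
    case PInf
    have "0 < norm (x $ k)"
      using k by simp
    then show ?thesis
      unfolding PInf using norm_le_lpnorm_infinity[of x k] by linarith
  qed (use assms in simp)
qed

lemma sum_norm_le_card_powr_lpnorm:
  assumes "1 \<le> r"
  shows "(\<Sum>i\<in>S. norm (x $ i)) \<le> card S powr (1 - 1 / r) * lpnorm (ereal r) x"
proof -
  have "(\<Sum>i\<in>S. norm (x $ i)) \<le> card S powr (1 - 1 / r) * (\<Sum>i\<in>S. norm (x $ i) powr r) powr (1 / r)"
    using assms by (intro sum_le_card_powr_sum_powr) auto
  also have "\<dots> \<le> card S powr (1 - 1 / r) * lpnorm (ereal r) x"
    unfolding lpnorm_ereal using assms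
    by (intro mult_left_mono powr_mono2 sum_mono2 sum_nonneg) auto
  finally show ?thesis .
qed

lemma sum_norm_le_card_lpnorm_infinity: "(\<Sum>i\<in>S. norm (x $ i)) \<le> card S * lpnorm \<infinity> x"
  using sum_bounded_above[of S "\<lambda>i. norm (x $ i)" "lpnorm \<infinity> x"]
  by (simp add: norm_le_lpnorm_infinity)

lemma lpnorm_ereal_flat:
  assumes "\<And>i. norm (y $ i) = (if i \<in> S then \<alpha> else 0)" and "0 < r" and "0 \<le> \<alpha>"
  shows "lpnorm (ereal r) y = card S powr (1 / r) * \<alpha>"
proof -
  have "lpnorm (ereal r) y = (card S * \<alpha> powr r) powr (1 / r)"
    unfolding lpnorm_ereal
    by (subst sum.mono_neutral_cong_right[of UNIV S _ "\<lambda>_. \<alpha> powr r"]) (auto simp: assms(1))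
  also have "\<dots> = card S powr (1 / r) * \<alpha>"
    using assms(2,3) by (simp add: powr_mult powr_powr)
  finally show ?thesis .
qed

lemma lpnorm_infinity_flat:
  assumes "\<And>i. norm (y $ i) = (if i \<in> S then \<alpha> else 0)" and "S \<noteq> {}" and "0 \<le> \<alpha>"
  shows "lpnorm \<infinity> y = \<alpha>"
proof (rule antisym)
  show "lpnorm \<infinity> y \<le> \<alpha>"
    using assms(3) by (simp add: lpnorm_infinity_le_iff assms(1))
  obtain k where "k \<in> S"
    using assms(2) by blast
  then show "\<alpha> \<le> lpnorm \<infinity> y"
    using norm_le_lpnorm_infinity[of y k] by (simp add: assms(1))
qed

lemma sum_norm_support_mult_lpnorm_le:
  fixes x y :: "'a::real_normed_vector ^ 'n"
  assumes "1 \<le> q" and flat: "equal_modulus_support y"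
  shows "(\<Sum>i | y $ i \<noteq> 0. norm (x $ i)) * lpnorm q y \<le> (\<Sum>i\<in>UNIV. norm (y $ i)) * lpnorm q x"
proof (cases "y = 0")
  case False
  then obtain k where k: "y $ k \<noteq> 0"
    by (metis vec_eq_iff zero_index)
  define S where "S = {i. y $ i \<noteq> 0}"
  define n where "n = real (card S)"
  define \<alpha> where "\<alpha> = norm (y $ k)"
  have "0 < \<alpha>"
    using k by (simp add: \<alpha>_def)
  have norm_y: "norm (y $ i) = (if i \<in> S then \<alpha> else 0)" for i
  proof (cases "y $ i = 0")
    case False
    then have "norm (y $ i) = \<alpha>"
      using flat k unfolding equal_modulus_support_def \<alpha>_def by blast
    then show ?thesis
      using False by (simp add: S_def)
  qed (simp add: S_def)
  have sum_norm_y: "(\<Sum>i\<in>UNIV. norm (y $ i)) = n * \<alpha>"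
    unfolding n_def by (subst sum.mono_neutral_cong_right[of UNIV S _ "\<lambda>_. \<alpha>"]) (auto simp: norm_y)
  show ?thesis
  proof (cases q)
    case (real r)
    with assms(1) have r: "1 \<le> r"
      by simp
    have x_le: "(\<Sum>i\<in>S. norm (x $ i)) \<le> n powr (1 - 1 / r) * lpnorm q x"
      unfolding real n_def using r by (rule sum_norm_le_card_powr_lpnorm)
    have "lpnorm q y = n powr (1 / r) * \<alpha>"
      unfolding real n_def using r \<open>0 < \<alpha>\<close> by (intro lpnorm_ereal_flat norm_y) auto
    then have "(\<Sum>i\<in>S. norm (x $ i)) * lpnorm q y \<le> n powr (1 - 1 / r) * lpnorm q x * (n powr (1 / r) * \<alpha>)"
      using x_le by (simp add: \<alpha>_def mult_right_mono)
    also have "\<dots> = n * \<alpha> * lpnorm q x"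
      using k by (simp add: n_def S_def card_gt_0_iff mult_ac flip: powr_add)
    finally show ?thesis
      by (simp add: S_def sum_norm_y)
  next
    case PInf
    have "lpnorm q y = \<alpha>"
      unfolding PInf using k \<open>0 < \<alpha>\<close> by (intro lpnorm_infinity_flat[of _ S] norm_y) (auto simp: S_def)
    moreover have "(\<Sum>i\<in>S. norm (x $ i)) \<le> n * lpnorm q x"
      unfolding PInf n_def by (rule sum_norm_le_card_lpnorm_infinity)
    ultimately have "(\<Sum>i\<in>S. norm (x $ i)) * lpnorm q y \<le> n * lpnorm q x * \<alpha>"
      using \<open>0 < \<alpha>\<close> by (simp add: mult_right_mono)
    then show ?thesis
      by (simp add: S_def sum_norm_y mult_ac)
  qed (use assms(1) in simp)
qed simp

lemma Km1_eq_axis: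
  assumes "v \<in> Km1" and "v $ k \<noteq> 0"
  shows "v = axis k (v $ k)"
proof -
  have "v $ i = 0" if "i \<noteq> k" for i
    using assms that by (auto simp: Km1_def card_le_Suc0_iff_eq)
  then show ?thesis
    by (auto simp: vec_eq_iff axis_def)
qed

lemma lpnorm_infinity_axis: "lpnorm \<infinity> (axis k a) = norm a"
proof (rule antisym)
  show "lpnorm \<infinity> (axis k a) \<le> norm a"
    by (simp add: lpnorm_infinity_le_iff axis_def)
  show "norm a \<le> lpnorm \<infinity> (axis k a)"
    using norm_le_lpnorm_infinity[of "axis k a" k] by (simp add: axis_def)
qed

section \<open>Directional derivatives of the l_p norm\<close>

lemma has_real_derivative_abs_powr_0:
  fixes r :: real
  assumes "1 < r"
  shows "((\<lambda>t. \<bar>t\<bar> powr r) has_real_derivative 0) (at 0)"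
proof -
  have "((\<lambda>t. \<bar>t\<bar> powr r / t) \<longlongrightarrow> 0) (at 0)"
  proof (rule Lim_null_comparison)
    show "\<forall>\<^sub>F t in at 0. norm (\<bar>t\<bar> powr r / t) \<le> \<bar>t\<bar> powr (r - 1)"
      by (auto simp: eventually_at_filter abs_divide powr_diff)
    show "((\<lambda>t. \<bar>t\<bar> powr (r - 1)) \<longlongrightarrow> 0) (at (0::real))"
      using assms by (auto intro!: tendsto_zero_powrI tendsto_rabs_zero tendsto_ident_at)
  qed
  then show ?thesis
    by (simp add: has_field_derivative_iff)
qed

text \<open>For a = 0 the stated derivative is 0, whatever the junk value of 0 powr (r - 2).\<close>

lemma has_real_derivative_norm_powr:
  fixes a d :: "'a::real_inner"
  assumes "a \<noteq> 0 \<or> 1 < r"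
  shows "((\<lambda>t. norm (a + t *\<^sub>R d) powr r) has_real_derivative r * norm a powr (r - 2) * (a \<bullet> d)) (at 0)"
proof (cases "a = 0")
  case True
  then have "((\<lambda>t. \<bar>t\<bar> powr r * norm d powr r) has_real_derivative 0 * norm d powr r) (at 0)"
    using assms by (intro DERIV_cmult_right has_real_derivative_abs_powr_0) auto
  then show ?thesis
    using True by (simp add: powr_mult)
next
  case False
  have "((\<lambda>t. a + t *\<^sub>R d) has_derivative (\<lambda>t. t *\<^sub>R d)) (at 0)"
    by (auto intro!: derivative_eq_intros)
  from has_derivative_compose[OF this has_derivative_norm[of "a + 0 *\<^sub>R d"]] False
  have "((\<lambda>t. norm (a + t *\<^sub>R d)) has_derivative (\<lambda>t. (t *\<^sub>R d) \<bullet> sgn a)) (at 0)"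
    by simp
  then have "((\<lambda>t. norm (a + t *\<^sub>R d)) has_real_derivative (sgn a \<bullet> d)) (at 0)"
    by (simp add: has_field_derivative_def inner_commute mult_commute_abs)
  from DERIV_fun_powr[OF this, of r] False show ?thesis
    by (simp add: sgn_div_norm powr_diff field_simps power2_eq_square)
qed

lemma lpnorm_has_real_derivative:
  fixes v h :: "'a::real_inner ^ 'n"
  assumes "0 < r" and "v \<noteq> 0" and "\<And>i. v $ i \<noteq> 0 \<or> 1 < r"
  shows "((\<lambda>t. lpnorm (ereal r) (v + t *\<^sub>R h)) has_real_derivative
           lpnorm (ereal r) v powr (1 - r) * (h \<bullet> (\<chi> i. norm (v $ i) powr (r - 2) *\<^sub>R v $ i))) (at 0)"
proof -
  define S where "S t = (\<Sum>i\<in>UNIV. norm (v $ i + t *\<^sub>R h $ i) powr r)" for t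
  have "(S has_real_derivative (\<Sum>i\<in>UNIV. r * norm (v $ i) powr (r - 2) * (v $ i \<bullet> h $ i))) (at 0)"
    unfolding S_def by (intro DERIV_sum has_real_derivative_norm_powr assms(3))
  also have "(\<Sum>i\<in>UNIV. r * norm (v $ i) powr (r - 2) * (v $ i \<bullet> h $ i))
      = r * (h \<bullet> (\<chi> i. norm (v $ i) powr (r - 2) *\<^sub>R v $ i))"
    by (simp add: inner_vec_def sum_distrib_left inner_commute mult_ac)
  finally have dS: "(S has_real_derivative \<dots>) (at 0)" .
  have "0 < lpnorm (ereal r) v"
    using assms by (intro lpnorm_pos) auto
  then have S0: "0 < S 0"
    by (auto simp: S_def lpnorm_ereal order_less_le intro: sum_nonneg)
  have "lpnorm (ereal r) (v + t *\<^sub>R h) = S t powr (1 / r)" for t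
    by (simp add: S_def lpnorm_ereal)
  moreover have "lpnorm (ereal r) v powr (1 - r) = S 0 powr (1 / r - 1)"
    using assms(1) by (simp add: S_def lpnorm_ereal powr_powr field_simps)
  ultimately show ?thesis
    using DERIV_fun_powr[OF dS S0, of "1 / r"] assms(1) by simp
qed

section \<open>Functionals attaining their dual norm\<close>

text \<open>The quotient (x \<bullet> w) / f x is maximal at x = v; cross-multiplied to avoid division by f x = 0.\<close>

definition attains_dual_norm :: "('v::real_inner \<Rightarrow> real) \<Rightarrow> 'v \<Rightarrow> 'v \<Rightarrow> bool" where
  "attains_dual_norm f w v \<longleftrightarrow> (\<forall>x. (x \<bullet> w) * f v \<le> (v \<bullet> w) * f x)"

lemma attains_dual_norm_inner_nonneg:
  assumes "attains_dual_norm (lpnorm p) w v" and "0 < p" and "v \<noteq> 0"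
  shows "0 \<le> v \<bullet> w"
proof -
  have "- (v \<bullet> w) * lpnorm p v \<le> (v \<bullet> w) * lpnorm p v"
    using assms(1) unfolding attains_dual_norm_def by (metis inner_minus_left lpnorm_uminus)
  then show ?thesis
    using lpnorm_pos[OF assms(2,3)] by (simp add: zero_le_mult_iff)
qed

lemma attains_dual_norm_derivative:
  assumes "attains_dual_norm f w v"
    and "((\<lambda>t. f (v + t *\<^sub>R h)) has_real_derivative D) (at 0)"
  shows "(v \<bullet> w) * D = (h \<bullet> w) * f v"
proof -
  define g where "g t = (v \<bullet> w) * f (v + t *\<^sub>R h) - ((v + t *\<^sub>R h) \<bullet> w) * f v" for t
  have "(g has_real_derivative (v \<bullet> w) * D - (h \<bullet> w) * f v) (at 0)"
    unfolding g_def using assms(2)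
    by (auto intro!: derivative_eq_intros simp: inner_add_left algebra_simps)
  moreover have "\<forall>t. \<bar>0 - t\<bar> < 1 \<longrightarrow> g 0 \<le> g t"
    using assms(1) by (simp add: g_def attains_dual_norm_def)
  ultimately have "(v \<bullet> w) * D - (h \<bullet> w) * f v = 0"
    by (rule DERIV_local_min[OF _ zero_less_one])
  then show ?thesis
    by simp
qed

lemma attains_dual_norm_flat:
  fixes y :: "'a::real_inner ^ 'n"
  assumes "1 \<le> q" and flat: "equal_modulus_support y"
  shows "attains_dual_norm (lpnorm q) y y"
proof (cases "y = 0")
  case False
  then obtain k where k: "y $ k \<noteq> 0"
    by (metis vec_eq_iff zero_index)
  define \<alpha> where "\<alpha> = norm (y $ k)"
  have "0 < \<alpha>"
    using k by (simp add: \<alpha>_def)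
  have norm_y: "norm (y $ i) = (if y $ i = 0 then 0 else \<alpha>)" for i
  proof (cases "y $ i = 0")
    case False
    then have "norm (y $ i) = \<alpha>"
      using flat k unfolding equal_modulus_support_def \<alpha>_def by blast
    then show ?thesis
      using False by simp
  qed simp
  have inner_le: "x \<bullet> y \<le> \<alpha> * (\<Sum>i | y $ i \<noteq> 0. norm (x $ i))" for x
  proof -
    have "x \<bullet> y \<le> (\<Sum>i\<in>UNIV. norm (x $ i) * norm (y $ i))"
      unfolding inner_vec_def by (intro sum_mono norm_cauchy_schwarz)
    also have "\<dots> = (\<Sum>i | y $ i \<noteq> 0. \<alpha> * norm (x $ i))"
      by (rule sum.mono_neutral_cong_right) (auto simp: norm_y)
    finally show ?thesis
      by (simp add: sum_distrib_left)
  qed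
  have inner_self: "y \<bullet> y = \<alpha> * (\<Sum>i\<in>UNIV. norm (y $ i))"
    unfolding inner_vec_def sum_distrib_left
    by (rule sum.cong) (auto simp: norm_y power2_eq_square simp flip: power2_norm_eq_inner)
  show ?thesis
    unfolding attains_dual_norm_def
  proof
    fix x
    have "(x \<bullet> y) * lpnorm q y \<le> \<alpha> * ((\<Sum>i | y $ i \<noteq> 0. norm (x $ i)) * lpnorm q y)"
      using inner_le[of x] lpnorm_nonneg[of q y] by (simp add: mult_right_mono flip: mult.assoc)
    also have "\<dots> \<le> \<alpha> * ((\<Sum>i\<in>UNIV. norm (y $ i)) * lpnorm q x)"
      using sum_norm_support_mult_lpnorm_le[OF assms] \<open>0 < \<alpha>\<close> by (simp add: mult_left_mono)
    finally show "(x \<bullet> y) * lpnorm q y \<le> (y \<bullet> y) * lpnorm q x"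
      by (simp add: inner_self mult.assoc)
  qed
qed (simp add: attains_dual_norm_def)

lemma equal_modulus_support_norm_powr_scaleR:
  assumes "equal_modulus_support v" and "v $ k \<noteq> 0"
  shows "(\<chi> i. norm (v $ i) powr s *\<^sub>R v $ i) = norm (v $ k) powr s *\<^sub>R v"
proof -
  have "norm (v $ i) powr s *\<^sub>R v $ i = norm (v $ k) powr s *\<^sub>R v $ i" for i
  proof (cases "v $ i = 0")
    case False
    then have "norm (v $ i) = norm (v $ k)"
      using assms unfolding equal_modulus_support_def by blast
    then show ?thesis
      by simp
  qed simp
  then show ?thesis
    by (simp add: vec_eq_iff)
qed

lemma attains_dual_norm_lpnorm_ereal_parallel:
  fixes v w :: "'a::real_inner ^ 'n"
  assumes "0 < r" and "v \<noteq> 0" and flat: "equal_modulus_support v"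
    and "\<And>i. v $ i \<noteq> 0 \<or> 1 < r"
    and dual: "attains_dual_norm (lpnorm (ereal r)) w v"
  shows "\<exists>c. w = c *\<^sub>R v"
proof -
  obtain k where k: "v $ k \<noteq> 0"
    using \<open>v \<noteq> 0\<close> by (metis vec_eq_iff zero_index)
  define \<beta> where "\<beta> = norm (v $ k)"
  define L where "L = lpnorm (ereal r) v"
  have "0 < L"
    using assms(1,2) by (simp add: L_def lpnorm_pos)
  have gradient: "(\<chi> i. norm (v $ i) powr (r - 2) *\<^sub>R v $ i) = \<beta> powr (r - 2) *\<^sub>R v"
    unfolding \<beta>_def by (rule equal_modulus_support_norm_powr_scaleR[OF flat k])
  have "h \<bullet> w = h \<bullet> (((v \<bullet> w) * L powr (1 - r) * \<beta> powr (r - 2) / L) *\<^sub>R v)" for h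
  proof -
    have "(v \<bullet> w) * (L powr (1 - r) * (h \<bullet> (\<beta> powr (r - 2) *\<^sub>R v))) = (h \<bullet> w) * L"
      using attains_dual_norm_derivative[OF dual lpnorm_has_real_derivative[OF assms(1,2,4)]]
      by (simp add: gradient L_def)
    then show ?thesis
      using \<open>0 < L\<close> by (simp add: field_simps)
  qed
  then have "w = ((v \<bullet> w) * L powr (1 - r) * \<beta> powr (r - 2) / L) *\<^sub>R v"
    using vector_eq_ldot by blast
  then show ?thesis
    by blast
qed

lemma attains_dual_norm_lpnorm_infinity_sum_norm_le:
  fixes v w :: "'a::real_inner ^ 'n"
  assumes dual: "attains_dual_norm (lpnorm \<infinity>) w v" and "v \<noteq> 0"
  shows "(\<Sum>i\<in>UNIV. norm (w $ i)) * lpnorm \<infinity> v \<le> v \<bullet> w"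
proof -
  define x where "x = (\<chi> i. sgn (w $ i))"
  have "sgn a \<bullet> a = norm a" for a :: 'a
    by (cases "a = 0") (simp_all add: sgn_div_norm dot_square_norm power2_eq_square)
  then have "x \<bullet> w = (\<Sum>i\<in>UNIV. norm (w $ i))"
    by (simp add: x_def inner_vec_def)
  have "(x \<bullet> w) * lpnorm \<infinity> v \<le> (v \<bullet> w) * lpnorm \<infinity> x"
    using dual by (simp add: attains_dual_norm_def)
  also have "\<dots> \<le> v \<bullet> w"
    using attains_dual_norm_inner_nonneg[OF dual _ \<open>v \<noteq> 0\<close>]
    by (intro mult_left_le) (simp_all add: lpnorm_infinity_le_iff x_def norm_sgn)
  finally show ?thesis
    by (simp add: \<open>x \<bullet> w = (\<Sum>i\<in>UNIV. norm (w $ i))\<close>)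
qed

lemma attains_dual_norm_lpnorm_infinity_parallel:
  fixes v w :: "'a::real_inner ^ 'n"
  assumes "v \<in> Km1" and "v \<noteq> 0" and dual: "attains_dual_norm (lpnorm \<infinity>) w v"
  shows "\<exists>c. w = c *\<^sub>R v"
proof -
  obtain k where k: "v $ k \<noteq> 0"
    using \<open>v \<noteq> 0\<close> by (metis vec_eq_iff zero_index)
  have v_axis: "v = axis k (v $ k)"
    using Km1_eq_axis[OF assms(1) k] .
  have v_zero: "v $ i = 0" if "i \<noteq> k" for i
    using that by (subst v_axis) (simp add: axis_def)
  have upper: "norm (v $ k) * (\<Sum>i\<in>UNIV. norm (w $ i)) \<le> v $ k \<bullet> w $ k"
    using attains_dual_norm_lpnorm_infinity_sum_norm_le[OF dual \<open>v \<noteq> 0\<close>]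
      lpnorm_infinity_axis[of k "v $ k", folded v_axis] inner_axis'[of k "v $ k" w, folded v_axis]
    by (simp add: mult.commute)
  have lower: "norm (v $ k) * norm (w $ k) \<le> norm (v $ k) * (\<Sum>i\<in>UNIV. norm (w $ i))"
    by (intro mult_left_mono member_le_sum) auto
  have cs: "v $ k \<bullet> w $ k \<le> norm (v $ k) * norm (w $ k)"
    by (rule norm_cauchy_schwarz)
  have sum_le: "(\<Sum>i\<in>UNIV. norm (w $ i)) \<le> norm (w $ k)"
    using order_trans[OF upper cs] k by simp
  have w_zero: "w $ i = 0" if "i \<noteq> k" for i
  proof -
    have "norm (w $ i) + norm (w $ k) \<le> (\<Sum>j\<in>UNIV. norm (w $ j))"
      using sum_mono2[of UNIV "{i, k}" "\<lambda>j. norm (w $ j)"] that by simp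
    then have "norm (w $ i) \<le> 0"
      using sum_le by linarith
    then show ?thesis
      by simp
  qed
  have collinear: "norm (v $ k) *\<^sub>R w $ k = norm (w $ k) *\<^sub>R v $ k"
    using upper lower cs by (simp flip: norm_cauchy_schwarz_eq)
  define c where "c = norm (w $ k) / norm (v $ k)"
  have "w $ k = (1 / norm (v $ k)) *\<^sub>R (norm (v $ k) *\<^sub>R w $ k)"
    using k by simp
  also have "\<dots> = c *\<^sub>R v $ k"
    by (simp add: collinear c_def)
  finally have "w $ i = c *\<^sub>R v $ i" for i
    by (cases "i = k") (simp_all add: w_zero v_zero)
  then show ?thesis
    by (auto simp: vec_eq_iff)
qed

lemma attains_dual_norm_lpnorm_imp_parallel:
  fixes v w :: "'a::real_inner ^ 'n"
  assumes "v \<noteq> 0" and "equal_modulus_support v"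
    and "(1 < p \<and> p < \<infinity>) \<or> (p = 1 \<and> v \<in> K1) \<or> (p = \<infinity> \<and> v \<in> Km1)"
    and "attains_dual_norm (lpnorm p) w v"
  shows "\<exists>c. w = c *\<^sub>R v"
  using assms(3)
proof (elim disjE conjE)
  assume "1 < p" and "p < \<infinity>"
  then obtain r where "p = ereal r" and "1 < r"
    by (cases p) auto
  then show ?thesis
    using assms by (intro attains_dual_norm_lpnorm_ereal_parallel[of r]) auto
next
  assume "p = 1" and "v \<in> K1"
  obtain k where k: "v $ k \<noteq> 0"
    using \<open>v \<noteq> 0\<close> by (metis vec_eq_iff zero_index)
  have "v $ i \<noteq> 0" for i
  proof -
    have "norm (v $ i) = norm (v $ k)"
      using \<open>v \<in> K1\<close> unfolding K1_def by blast
    then show ?thesis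
      using k by auto
  qed
  then show ?thesis
    using assms \<open>p = 1\<close> by (intro attains_dual_norm_lpnorm_ereal_parallel[of 1]) (auto simp: one_ereal_def)
next
  assume "p = \<infinity>" and "v \<in> Km1"
  then show ?thesis
    using assms by (intro attains_dual_norm_lpnorm_infinity_parallel) auto
qed

lemma is_pq_maximizer_bound:
  assumes "is_pq_maximizer p q A v" and "0 < p"
  shows "lpnorm q (A *v x) * lpnorm p v \<le> lpnorm q (A *v v) * lpnorm p x"
proof (cases "x = 0")
  case False
  have "0 < lpnorm p v" and "0 < lpnorm p x"
    using assms False by (simp_all add: is_pq_maximizer_def lpnorm_pos)
  moreover have "lpnorm q (A *v x) / lpnorm p x \<le> lpnorm q (A *v v) / lpnorm p v"
    using assms(1) False unfolding is_pq_maximizer_def by blast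
  ultimately show ?thesis
    by (simp add: field_simps)
qed simp

lemma attains_dual_norm_adjoint:
  fixes A :: "'a::{real_inner, semiring_1} ^ 'm ^ 'n" and B :: "'a ^ 'n ^ 'm"
  assumes max: "is_pq_maximizer p q A v" and "0 < p" and "0 < q"
    and adjoint: "\<And>x u. (A *v x) \<bullet> u = x \<bullet> (B *v u)"
    and dual: "attains_dual_norm (lpnorm q) u (A *v v)"
  shows "attains_dual_norm (lpnorm p) (B *v u) v"
  unfolding attains_dual_norm_def
proof
  fix x
  define y where "y = A *v v"
  have bound: "lpnorm q (A *v x) * lpnorm p v \<le> lpnorm q y * lpnorm p x"
    unfolding y_def by (rule is_pq_maximizer_bound[OF max \<open>0 < p\<close>])
  have "0 < lpnorm p v"
    using max \<open>0 < p\<close> by (simp add: is_pq_maximizer_def lpnorm_pos)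
  show "(x \<bullet> (B *v u)) * lpnorm p v \<le> (v \<bullet> (B *v u)) * lpnorm p x"
  proof (cases "y = 0")
    case True
    then have "\<not> 0 < lpnorm q (A *v x)"
      using bound \<open>0 < lpnorm p v\<close> by (simp add: mult_le_0_iff)
    then have "A *v x = 0"
      using lpnorm_pos[OF \<open>0 < q\<close>] by blast
    then show ?thesis
      using True by (simp add: y_def flip: adjoint)
  next
    case False
    have "0 < lpnorm q y"
      using False \<open>0 < q\<close> by (simp add: lpnorm_pos)
    have "0 \<le> y \<bullet> u"
      using attains_dual_norm_inner_nonneg[OF dual[folded y_def] \<open>0 < q\<close> False] .
    have "(x \<bullet> (B *v u)) * lpnorm p v * lpnorm q y = ((A *v x) \<bullet> u) * lpnorm q y * lpnorm p v"
      by (simp add: adjoint mult_ac)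
    also have "\<dots> \<le> (y \<bullet> u) * lpnorm q (A *v x) * lpnorm p v"
      using dual \<open>0 < lpnorm p v\<close> unfolding attains_dual_norm_def y_def
      by (intro mult_right_mono) auto
    also have "\<dots> \<le> (y \<bullet> u) * (lpnorm q y * lpnorm p x)"
      using mult_left_mono[OF bound \<open>0 \<le> y \<bullet> u\<close>] by (simp add: mult.assoc)
    also have "\<dots> = (v \<bullet> (B *v u)) * lpnorm p x * lpnorm q y"
      by (simp add: y_def adjoint mult_ac)
    finally show ?thesis
      using \<open>0 < lpnorm q y\<close> by simp
  qed
qed

lemma lemma3p1_hyp_adjoint_eigenvector:
  fixes A :: "'a::{real_inner, semiring_1} ^ 'm ^ 'n" and B :: "'a ^ 'n ^ 'm"
  assumes "1 \<le> p" and "1 \<le> q"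
    and adjoint: "\<And>x u. (A *v x) \<bullet> u = x \<bullet> (B *v u)"
    and hyp: "lemma3p1_hyp p q A v"
  shows "\<exists>c::real. (B ** A) *v v = c *\<^sub>R v"
proof -
  have max: "is_pq_maximizer p q A v"
    and "equal_modulus_support v" and "equal_modulus_support (A *v v)"
    and p_cases: "(1 < p \<and> p < \<infinity>) \<or> (p = 1 \<and> v \<in> K1) \<or> (p = \<infinity> \<and> v \<in> Km1)"
    using hyp by (auto simp: lemma3p1_hyp_def)
  have "v \<noteq> 0"
    using max by (simp add: is_pq_maximizer_def)
  have "0 < p"
    using assms(1) by (cases p) auto
  have "0 < q"
    using assms(2) by (cases q) auto
  have "attains_dual_norm (lpnorm q) (A *v v) (A *v v)"
    by (rule attains_dual_norm_flat) fact+
  then have "attains_dual_norm (lpnorm p) (B *v (A *v v)) v"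
    by (rule attains_dual_norm_adjoint[OF max \<open>0 < p\<close> \<open>0 < q\<close> adjoint])
  then obtain c where "B *v (A *v v) = c *\<^sub>R v"
    using attains_dual_norm_lpnorm_imp_parallel[OF \<open>v \<noteq> 0\<close> \<open>equal_modulus_support v\<close> p_cases]
    by blast
  then show ?thesis
    by (auto simp: matrix_vector_mul_assoc)
qed

lemma matrix_vector_mult_inner_transpose:
  fixes A :: "real ^ 'm ^ 'n"
  shows "(A *v x) \<bullet> u = x \<bullet> (transpose A *v u)"
  by (metis dot_lmul_matrix inner_commute transpose_matrix_vector)

lemma inner_mult_left_cnj: "(a * z) \<bullet> u = z \<bullet> (cnj a * u)"
  by (simp add: inner_complex_def algebra_simps)

lemma matrix_vector_mult_inner_cadjoint:
  fixes A :: "complex ^ 'm ^ 'n"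
  shows "(A *v x) \<bullet> u = x \<bullet> (cadjoint A *v u)"
proof -
  have "(A *v x) \<bullet> u = (\<Sum>i\<in>UNIV. \<Sum>j\<in>UNIV. x $ j \<bullet> (cnj (A $ i $ j) * u $ i))"
    by (simp only: inner_vec_def matrix_vector_mult_def vec_lambda_beta inner_sum_left inner_mult_left_cnj)
  also have "\<dots> = (\<Sum>j\<in>UNIV. \<Sum>i\<in>UNIV. x $ j \<bullet> (cnj (A $ i $ j) * u $ i))"
    by (rule sum.swap)
  also have "\<dots> = x \<bullet> (cadjoint A *v u)"
    by (simp add: inner_vec_def matrix_vector_mult_def cadjoint_def inner_sum_right)
  finally show ?thesis .
qed

theorem lemma3p1:
  fixes p q :: ereal
  assumes "1 \<le> p" and "1 \<le> q"
  shows "(\<forall>(A :: real ^ 'm ^ 'n) v. lemma3p1_hyp p q A v \<longrightarrow>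
            (\<exists>c. (transpose A ** A) *v v = c *s v))
       \<and> (\<forall>(A :: complex ^ 'm ^ 'n) v. lemma3p1_hyp p q A v \<longrightarrow>
            (\<exists>c. (cadjoint A ** A) *v v = c *s v))"
proof (intro conjI allI impI)
  fix A :: "real ^ 'm ^ 'n" and v
  assume "lemma3p1_hyp p q A v"
  then obtain c where "(transpose A ** A) *v v = c *\<^sub>R v"
    using lemma3p1_hyp_adjoint_eigenvector[OF assms matrix_vector_mult_inner_transpose] by blast
  then show "\<exists>c. (transpose A ** A) *v v = c *s v"
    by (auto simp: scalar_mult_eq_scaleR)
next
  fix A :: "complex ^ 'm ^ 'n" and v
  assume "lemma3p1_hyp p q A v"
  then obtain c where "(cadjoint A ** A) *v v = c *\<^sub>R v"
    using lemma3p1_hyp_adjoint_eigenvector[OF assms matrix_vector_mult_inner_cadjoint] by blast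
  then have "(cadjoint A ** A) *v v = complex_of_real c *s v"
    by (simp add: vec_eq_iff scaleR_conv_of_real[where 'a = complex])
  then show "\<exists>c. (cadjoint A ** A) *v v = c *s v"
    by blast
qed

end
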